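(* Let $G$ be a group with identity $e$, $A$ a set with at least two elements, $\tau: A^G\to A^G$ a lazy cellular automaton, and $n\in\mathbb{Z}_+$. Then \[\mathrm{ord}(\tau) > n \iff \tau^{j-1}\neq \tau^{j} \text{ for all } j \in \{1, \ldots, n\}. \] Furthermore, $\mathrm{ord}(\tau) = \min\{n\geq 2: \tau^{n-1}=\tau^n\}$.
   Context: $A^G$ is the set of maps $G \to A$ with shift action $(g\cdot x)(h) := x(hg)$. A cellular automaton is a map $\tau : A^G \to A^G$ with a finite $S \subseteq G$ and $\mu : A^S \to A$ such that $\tau(x)(g) = \mu((g\cdot x)|_S)$. $\tau$ is lazy if there is such a local defining map $\mu : A^S \to A$ with $e \in S$ and $p \in A^S$ such that for all $z \in A^S$: $\mu(z) = z(e)$ iff $z \neq p$. $\tau^k$ is the $k$-fold composition, $\tau^0$ the identity; $\mathrm{ord}(\tau) := |\{\tau^k : k \in \mathbb{N}\}|$ with $\mathbb{N}=\{0,1,2,\dots\}$ (possibly infinite; the minimum of the empty set is read as $\infty$). *)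

theory Defs
  imports Main "HOL-Library.FuncSet" "HOL-Library.Extended_Nat"
begin

text \<open>The group G is a type of class group_add (written additively, not necessarily
commutative; the identity e is 0).
Patterns in A^S are the extensional functions in S ->E UNIV.\<close>

definition shift :: "'g::group_add \<Rightarrow> ('g \<Rightarrow> 'a) \<Rightarrow> ('g \<Rightarrow> 'a)" where
  "shift g x = (\<lambda>h. x (h + g))"

definition cellular_automaton :: "(('g::group_add \<Rightarrow> 'a) \<Rightarrow> ('g \<Rightarrow> 'a)) \<Rightarrow> bool" where
  "cellular_automaton \<tau> \<longleftrightarrow>
     (\<exists>S (\<mu> :: ('g \<Rightarrow> 'a) \<Rightarrow> 'a). finite S \<and>
        (\<forall>x g. \<tau> x g = \<mu> (restrict (shift g x) S)))"

definition lazy_ca :: "(('g::group_add \<Rightarrow> 'a) \<Rightarrow> ('g \<Rightarrow> 'a)) \<Rightarrow> bool" where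
  "lazy_ca \<tau> \<longleftrightarrow>
     (\<exists>S (\<mu> :: ('g \<Rightarrow> 'a) \<Rightarrow> 'a) p. finite S \<and>
        (\<forall>x g. \<tau> x g = \<mu> (restrict (shift g x) S)) \<and>
        0 \<in> S \<and> p \<in> (S \<rightarrow>\<^sub>E UNIV) \<and>
        (\<forall>z \<in> S \<rightarrow>\<^sub>E UNIV. \<mu> z = z 0 \<longleftrightarrow> z \<noteq> p))"

definition ca_ord :: "('c \<Rightarrow> 'c) \<Rightarrow> enat" where
  "ca_ord \<tau> = (if finite (range (\<lambda>k. \<tau> ^^ k)) then enat (card (range (\<lambda>k. \<tau> ^^ k))) else \<infinity>)"

end

theory Submission
  imports Defs
begin

text \<open>A lazy automaton alters a cell only when it reads the exceptional pattern p, and then it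
always writes the same symbol \<mu> p \<noteq> p 0. So every change is one and the same transition
a \<mapsto> b, and a cell that has become b never changes again. Hence a configuration that recurs
under \<tau> is already fixed by \<tau>, and \<tau>^i = \<tau>^j with i < j forces \<tau>^i = \<tau>^(i+1): the powers of \<tau>
are pairwise distinct until they stabilise, and ord \<tau> is one more than the first index N with
\<tau>^N = \<tau>^(N+1). As \<tau> \<noteq> id, this N is positive.\<close>

lemma lazy_ca_single_transition:
  fixes \<tau> :: "('g::group_add \<Rightarrow> 'a) \<Rightarrow> ('g \<Rightarrow> 'a)"
  assumes "lazy_ca \<tau>"
  obtains a b where "\<And>x g. \<tau> x g \<noteq> x g \<Longrightarrow> x g = a \<and> \<tau> x g = b" and "\<tau> \<noteq> id"
proof -
  obtain S \<mu> p where local_rule: "\<forall>x g. \<tau> x g = \<mu> (restrict (shift g x) S)"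
    and "0 \<in> S" and p: "p \<in> S \<rightarrow>\<^sub>E UNIV"
    and lazy: "\<forall>z \<in> S \<rightarrow>\<^sub>E UNIV. \<mu> z = z 0 \<longleftrightarrow> z \<noteq> p"
    using assms unfolding lazy_ca_def by (elim exE conjE) (rule that; assumption)
  define window where "window x g = restrict (shift g x) S" for x :: "'g \<Rightarrow> 'a" and g
  have \<tau>_window: "\<tau> x g = \<mu> (window x g)" for x g
    using local_rule by (simp add: window_def)
  have window_centre: "window x g 0 = x g" for x g
    using \<open>0 \<in> S\<close> by (simp add: window_def shift_def)
  have "x g = p 0 \<and> \<tau> x g = \<mu> p" if "\<tau> x g \<noteq> x g" for x g
  proof -
    have "\<mu> (window x g) \<noteq> window x g 0"
      using that by (simp add: \<tau>_window window_centre)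
    moreover have "window x g \<in> S \<rightarrow>\<^sub>E UNIV"
      by (simp add: window_def)
    ultimately have "window x g = p"
      using lazy by blast
    then show ?thesis
      using window_centre[of x g] \<tau>_window[of x g] by simp
  qed
  moreover have "window p 0 = p"
    using p by (auto simp: window_def shift_def PiE_def extensional_def)
  then have "\<tau> p 0 \<noteq> p 0"
    using lazy p by (simp add: \<tau>_window)
  then have "\<tau> \<noteq> id" by auto
  ultimately show ?thesis by (rule that)
qed

lemma funpow_Suc_at_changed_cell:
  fixes \<tau> :: "('i \<Rightarrow> 'a) \<Rightarrow> ('i \<Rightarrow> 'a)"
  assumes single: "\<And>x g. \<tau> x g \<noteq> x g \<Longrightarrow> x g = a \<and> \<tau> x g = b"
    and changed: "\<tau> y g \<noteq> y g"
  shows "(\<tau> ^^ Suc k) y g = \<tau> y g"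
proof (induction k)
  case 0
  then show ?case by simp
next
  case (Suc k)
  define z where "z = (\<tau> ^^ Suc k) y"
  have "z g = b"
    using single[OF changed] Suc.IH by (simp add: z_def)
  have "\<tau> z g = z g"
  proof (rule ccontr)
    assume "\<tau> z g \<noteq> z g"
    with single[OF this] \<open>z g = b\<close> show False by simp
  qed
  then show ?case
    using Suc.IH by (simp add: z_def)
qed

lemma periodic_point_fixed:
  fixes \<tau> :: "('i \<Rightarrow> 'a) \<Rightarrow> ('i \<Rightarrow> 'a)"
  assumes single: "\<And>x g. \<tau> x g \<noteq> x g \<Longrightarrow> x g = a \<and> \<tau> x g = b"
    and periodic: "(\<tau> ^^ m) y = y" and "0 < m"
  shows "\<tau> y = y"
proof (rule ccontr)
  assume "\<tau> y \<noteq> y"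
  then obtain g where changed: "\<tau> y g \<noteq> y g" by auto
  obtain k where "m = Suc k"
    using \<open>0 < m\<close> gr0_conv_Suc by blast
  then have "(\<tau> ^^ m) y g = \<tau> y g"
    using funpow_Suc_at_changed_cell[of \<tau> a b, OF single changed] by simp
  with periodic changed show False by simp
qed

lemma funpow_eq_imp_stable:
  fixes f :: "'c \<Rightarrow> 'c"
  assumes periodic_fixed: "\<And>y m. (f ^^ m) y = y \<Longrightarrow> 0 < m \<Longrightarrow> f y = y"
    and eq: "f ^^ i = f ^^ j" and "i < j"
  shows "f ^^ i = f ^^ Suc i"
proof
  fix x
  have "f ^^ (j - i) \<circ> f ^^ i = f ^^ j"
    using \<open>i < j\<close> by (simp flip: funpow_add)
  also have "\<dots> = f ^^ i"
    using eq by simp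
  finally have "f ^^ (j - i) \<circ> f ^^ i = f ^^ i" .
  then have "f ((f ^^ i) x) = (f ^^ i) x"
    using periodic_fixed[of "j - i"] \<open>i < j\<close> by (metis comp_apply zero_less_diff)
  then show "(f ^^ i) x = (f ^^ Suc i) x" by simp
qed

lemma funpow_stable_from:
  fixes f :: "'c \<Rightarrow> 'c"
  assumes "f ^^ N = f ^^ Suc N" and "N \<le> k"
  shows "f ^^ k = f ^^ N"
  using \<open>N \<le> k\<close>
proof (induction k rule: dec_induct)
  case (step k)
  then show ?case
    using assms(1) by (metis funpow.simps(2))
qed simp

lemma ca_ord_eq_INF_stable:
  fixes f :: "'c \<Rightarrow> 'c"
  assumes no_cycle: "\<And>i j. f ^^ i = f ^^ j \<Longrightarrow> i < j \<Longrightarrow> f ^^ i = f ^^ Suc i"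
  shows "ca_ord f = (INF m \<in> {m. f ^^ m = f ^^ Suc m}. enat (Suc m))"
proof (cases "\<exists>m. f ^^ m = f ^^ Suc m")
  case True
  define N where "N = (LEAST m. f ^^ m = f ^^ Suc m)"
  have N: "f ^^ N = f ^^ Suc N"
    unfolding N_def using True by (rule LeastI_ex)
  have below_N: "f ^^ m \<noteq> f ^^ Suc m" if "m < N" for m
    using that unfolding N_def by (rule not_less_Least)
  have "f ^^ k \<in> (\<lambda>k. f ^^ k) ` {..N}" for k
  proof (cases "k \<le> N")
    case False
    then have "f ^^ k = f ^^ N"
      by (intro funpow_stable_from[OF N]) simp
    then show ?thesis by simp
  qed simp
  then have "range (\<lambda>k. f ^^ k) = (\<lambda>k. f ^^ k) ` {..N}"
    by blast
  moreover have "inj_on (\<lambda>k. f ^^ k) {..N}"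
  proof (rule linorder_inj_onI')
    fix i j
    assume "i \<in> {..N}" "j \<in> {..N}" "i < j"
    then have "i < N" by simp
    show "f ^^ i \<noteq> f ^^ j"
    proof
      assume "f ^^ i = f ^^ j"
      then have "f ^^ i = f ^^ Suc i"
        using \<open>i < j\<close> by (rule no_cycle)
      with below_N[OF \<open>i < N\<close>] show False ..
    qed
  qed
  ultimately have "ca_ord f = enat (Suc N)"
    by (simp add: ca_ord_def card_image)
  moreover have "(INF m \<in> {m. f ^^ m = f ^^ Suc m}. enat (Suc m)) = enat (Suc N)"
  proof (rule INF_eqI)
    fix m
    assume "m \<in> {m. f ^^ m = f ^^ Suc m}"
    then have "\<not> m < N"
      using below_N by blast
    then show "enat (Suc N) \<le> enat (Suc m)" by simp
  next
    fix y
    assume "\<And>m. m \<in> {m. f ^^ m = f ^^ Suc m} \<Longrightarrow> y \<le> enat (Suc m)"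
    with N show "y \<le> enat (Suc N)"
      by blast
  qed
  ultimately show ?thesis
    by (simp only:)
next
  case False
  have "inj (\<lambda>k. f ^^ k)"
  proof (rule linorder_inj_onI')
    fix i j :: nat
    assume "i < j"
    then show "f ^^ i \<noteq> f ^^ j"
      using no_cycle False by metis
  qed
  then have "ca_ord f = \<infinity>"
    by (simp add: ca_ord_def finite_image_iff)
  moreover have "{m. f ^^ m = f ^^ Suc m} = {}"
    using False by simp
  ultimately show ?thesis
    by (simp add: top_enat_def)
qed

lemma Suc_image_stable_indices:
  fixes f :: "'c \<Rightarrow> 'c"
  assumes "f \<noteq> id"
  shows "{m. m \<ge> 2 \<and> f ^^ (m - 1) = f ^^ m} = Suc ` {m. f ^^ m = f ^^ Suc m}"
proof (rule set_eqI)
  fix m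
  have not_stable_0: "0 \<notin> {m. f ^^ m = f ^^ Suc m}"
    using assms by simp
  show "m \<in> {m. m \<ge> 2 \<and> f ^^ (m - 1) = f ^^ m} \<longleftrightarrow> m \<in> Suc ` {m. f ^^ m = f ^^ Suc m}"
  proof (cases m)
    case (Suc k)
    have "f ^^ k = f ^^ Suc k \<Longrightarrow> 0 < k"
      using not_stable_0 by (intro gr0I) blast
    \<comment> \<open>Unfolding \<open>f ^^ Suc k\<close> would let the simplifier loop on \<open>f ^^ k = f ^^ Suc k\<close>.\<close>
    with Suc show ?thesis
      by (auto simp: inj_image_mem_iff simp del: funpow.simps)
  qed simp
qed

lemma enat_less_INF_stable_iff:
  fixes f :: "'c \<Rightarrow> 'c"
  shows "enat n < (INF m \<in> {m. f ^^ m = f ^^ Suc m}. enat (Suc m))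
    \<longleftrightarrow> (\<forall>j \<in> {1..n}. f ^^ (j - 1) \<noteq> f ^^ j)"
  unfolding image_Suc_lessThan [symmetric]
  by (auto simp: le_INF_iff not_le simp del: funpow.simps simp flip: Suc_ile_eq)

theorem corollary2:
  fixes \<tau> :: "('g::group_add \<Rightarrow> 'a) \<Rightarrow> ('g \<Rightarrow> 'a)" and n :: nat
  assumes "\<exists>a b :: 'a. a \<noteq> b"
    and "lazy_ca \<tau>"
    and "n \<ge> 1"
  shows "(ca_ord \<tau> > enat n \<longleftrightarrow> (\<forall>j \<in> {1..n}. \<tau> ^^ (j - 1) \<noteq> \<tau> ^^ j))
         \<and> ca_ord \<tau> = Inf (enat ` {m. m \<ge> 2 \<and> \<tau> ^^ (m - 1) = \<tau> ^^ m})"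
proof -
  obtain a b where single: "\<And>x g. \<tau> x g \<noteq> x g \<Longrightarrow> x g = a \<and> \<tau> x g = b" and "\<tau> \<noteq> id"
    using lazy_ca_single_transition[OF assms(2)] by blast
  have "\<tau> ^^ i = \<tau> ^^ Suc i" if "\<tau> ^^ i = \<tau> ^^ j" and "i < j" for i j
    using periodic_point_fixed[of \<tau> a b, OF single] that by (rule funpow_eq_imp_stable)
  then have ord: "ca_ord \<tau> = (INF m \<in> {m. \<tau> ^^ m = \<tau> ^^ Suc m}. enat (Suc m))"
    by (rule ca_ord_eq_INF_stable)
  show ?thesis
    unfolding ord Suc_image_stable_indices[OF \<open>\<tau> \<noteq> id\<close>] enat_less_INF_stable_iff
    by (simp add: image_image)
qed

end
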